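(* Let $G$ be a finitely generated group, $H$ a finitely generated subgroup, $A$ a finite alphabet, $S\subseteq H$ finite and $\mu:A^S\to A$. Let $\Phi_H:A^H\to A^H$ and $\Phi_G:A^G\to A^G$ be the cellular automata defined by $\Phi_H(x)(h)=\mu(s\mapsto x(hs))$ and $\Phi_G(x)(g)=\mu(s\mapsto x(gs))$. If $\Phi_G$ has an equicontinuity point, then so does $\Phi_H$.
   Context: Metrics: fix a finite generating set $E_H$ of $H$ closed under inverses and a finite generating set $D\supseteq E_H$ of $G$ closed under inverses, with word metrics $d_H$, $d_G$. The Cantor metric on $A^H$ is $d^H(x,y)=2^{-k}$ with $k=\min\{d_H(1,h):x(h)\neq y(h)\}$, and on $A^G$ similarly $d^G$ using $d_G$; $B^H$, $B^G$ denote closed balls. A configuration $x$ is an equicontinuity point of a map $\Phi$ on such a space with balls $B$ if $\forall\epsilon>0\,\exists\delta>0\,\forall t\in\mathbb{N}$, $\Phi^t(B(x,\delta))\subseteq B(\Phi^t(x),\epsilon)$. (This notion does not depend on the choice of generating sets.) *)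

theory Defs
  imports Complex_Main "HOL-Algebra.Group" "HOL-Algebra.Generated_Groups" "HOL-Library.FuncSet"
begin

definition word_len :: "('g, 'b) monoid_scheme \<Rightarrow> 'g set \<Rightarrow> 'g \<Rightarrow> nat" where
  "word_len G D g =
     (LEAST n. \<exists>ws. length ws = n \<and> set ws \<subseteq> D \<and> foldr (\<lambda>a b. a \<otimes>\<^bsub>G\<^esub> b) ws \<one>\<^bsub>G\<^esub> = g)"

definition cantor_dist :: "('g, 'b) monoid_scheme \<Rightarrow> 'g set \<Rightarrow> 'g set \<Rightarrow> ('g \<Rightarrow> 'a) \<Rightarrow> ('g \<Rightarrow> 'a) \<Rightarrow> real" where
  "cantor_dist G D X x y =
     (if \<exists>h\<in>X. x h \<noteq> y h
      then (1/2) ^ (LEAST k. \<exists>h\<in>X. x h \<noteq> y h \<and> word_len G D h = k)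
      else 0)"

definition cantor_ball :: "('g, 'b) monoid_scheme \<Rightarrow> 'g set \<Rightarrow> 'g set \<Rightarrow> 'a set \<Rightarrow> ('g \<Rightarrow> 'a) \<Rightarrow> real \<Rightarrow> ('g \<Rightarrow> 'a) set" where
  "cantor_ball G D X A x r = {y \<in> X \<rightarrow>\<^sub>E A. cantor_dist G D X x y \<le> r}"

definition equicontinuity_point ::
  "('g, 'b) monoid_scheme \<Rightarrow> 'g set \<Rightarrow> 'g set \<Rightarrow> 'a set \<Rightarrow> (('g \<Rightarrow> 'a) \<Rightarrow> ('g \<Rightarrow> 'a)) \<Rightarrow> ('g \<Rightarrow> 'a) \<Rightarrow> bool" where
  "equicontinuity_point G D X A Phi x \<longleftrightarrow>
     x \<in> X \<rightarrow>\<^sub>E A \<and>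
     (\<forall>\<epsilon>>0. \<exists>\<delta>>0. \<forall>t::nat.
        (Phi ^^ t) ` cantor_ball G D X A x \<delta> \<subseteq> cantor_ball G D X A ((Phi ^^ t) x) \<epsilon>)"

definition cellular_automaton ::
  "('g, 'b) monoid_scheme \<Rightarrow> 'g set \<Rightarrow> (('g \<Rightarrow> 'a) \<Rightarrow> 'a) \<Rightarrow> 'g set \<Rightarrow> ('g \<Rightarrow> 'a) \<Rightarrow> ('g \<Rightarrow> 'a)" where
  "cellular_automaton G S mu X x = (\<lambda>h\<in>X. mu (\<lambda>s\<in>S. x (h \<otimes>\<^bsub>G\<^esub> s)))"

end

theory Submission
  imports Defs
begin

text \<open>Restricting an equicontinuity point x of \<Phi>_G to H gives one of \<Phi>_H. Since S \<subseteq> H,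
  restriction to H commutes with the automata. A configuration z close to x|H on A^H is extended
  by x outside H; it is close to x on A^G because only finitely many h \<in> H are D-short, so all of
  them are E-shorter than some bound. The orbits of the extension and of x then stay close in A^G,
  and closeness survives restriction because D-length is at most E-length on H, as E \<subseteq> D.\<close>

abbreviation word_prod :: "('g, 'b) monoid_scheme \<Rightarrow> 'g list \<Rightarrow> 'g" where
  "word_prod G ws \<equiv> foldr (\<lambda>a b. a \<otimes>\<^bsub>G\<^esub> b) ws \<one>\<^bsub>G\<^esub>"

context monoid
begin

lemma word_prod_closed: "set ws \<subseteq> carrier G \<Longrightarrow> word_prod G ws \<in> carrier G"
  by (induction ws) auto

lemma word_prod_append:
  "set xs \<subseteq> carrier G \<Longrightarrow> set ys \<subseteq> carrier G \<Longrightarrow>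
    word_prod G (xs @ ys) = word_prod G xs \<otimes> word_prod G ys"
  by (induction xs) (auto simp: word_prod_closed m_assoc)

end

lemma (in group) generate_eq_word_prods:
  assumes "D \<subseteq> carrier G" "\<forall>d\<in>D. inv d \<in> D"
  shows "generate G D = word_prod G ` lists D"
proof
  show "generate G D \<subseteq> word_prod G ` lists D"
  proof
    fix g assume "g \<in> generate G D"
    then show "g \<in> word_prod G ` lists D"
    proof (induction rule: generate.induct)
      case one
      show ?case by (rule image_eqI[of _ _ "[]"]) auto
    next
      case (incl h)
      then show ?case using assms(1) by (intro image_eqI[of _ _ "[h]"]) auto
    next
      case (inv h)
      then show ?case using assms by (intro image_eqI[of _ _ "[inv h]"]) auto
    next
      case (eng h1 h2)
      then obtain xs ys where "xs \<in> lists D" "ys \<in> lists D"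
        and "h1 = word_prod G xs" "h2 = word_prod G ys" by blast
      moreover have "word_prod G (xs @ ys) = word_prod G xs \<otimes> word_prod G ys"
        using assms(1) \<open>xs \<in> lists D\<close> \<open>ys \<in> lists D\<close> by (intro word_prod_append) auto
      ultimately show ?case by (intro image_eqI[of _ _ "xs @ ys"]) auto
    qed
  qed
next
  show "word_prod G ` lists D \<subseteq> generate G D"
  proof
    fix g assume "g \<in> word_prod G ` lists D"
    then obtain ws where "ws \<in> lists D" "g = word_prod G ws" by blast
    then show "g \<in> generate G D"
      by (induction ws arbitrary: g) (auto intro: generate.intros)
  qed
qed

lemma word_len_attained:
  assumes "g \<in> word_prod G ` lists D"
  shows "\<exists>ws\<in>lists D. length ws = word_len G D g \<and> word_prod G ws = g"
proof -
  have "\<exists>ws. length ws = word_len G D g \<and> set ws \<subseteq> D \<and> word_prod G ws = g"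
    unfolding word_len_def by (rule LeastI_ex) (use assms in auto)
  then show ?thesis by auto
qed

lemma word_len_le_length: "ws \<in> lists D \<Longrightarrow> word_len G D (word_prod G ws) \<le> length ws"
  unfolding word_len_def by (rule Least_le) auto

lemma word_len_antimono_gens:
  assumes "E \<subseteq> D" "g \<in> word_prod G ` lists E"
  shows "word_len G D g \<le> word_len G E g"
proof -
  obtain ws where "ws \<in> lists E" "length ws = word_len G E g" "word_prod G ws = g"
    using word_len_attained[OF assms(2)] by blast
  with assms(1) show ?thesis using word_len_le_length[of ws D G] by auto
qed

lemma finite_word_len_less:
  assumes "finite D"
  shows "finite {g \<in> word_prod G ` lists D. word_len G D g < n}"
proof (rule finite_subset)
  show "{g \<in> word_prod G ` lists D. word_len G D g < n}
      \<subseteq> word_prod G ` {ws. set ws \<subseteq> D \<and> length ws \<le> n}"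
  proof
    fix g assume "g \<in> {g \<in> word_prod G ` lists D. word_len G D g < n}"
    then have g: "g \<in> word_prod G ` lists D" "word_len G D g < n" by auto
    obtain ws where "ws \<in> lists D" "length ws = word_len G D g" "word_prod G ws = g"
      using word_len_attained[OF g(1)] by blast
    with g(2) show "g \<in> word_prod G ` {ws. set ws \<subseteq> D \<and> length ws \<le> n}" by auto
  qed
  show "finite (word_prod G ` {ws. set ws \<subseteq> D \<and> length ws \<le> n})"
    using finite_lists_length_le[OF assms] by blast
qed

lemma cantor_dist_le_power_iff:
  "cantor_dist G D X x y \<le> (1/2)^m \<longleftrightarrow> (\<forall>h\<in>X. word_len G D h < m \<longrightarrow> x h = y h)"
proof (cases "\<exists>h\<in>X. x h \<noteq> y h")
  case True
  define k where "k = (LEAST k. \<exists>h\<in>X. x h \<noteq> y h \<and> word_len G D h = k)"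
  have dist: "cantor_dist G D X x y = (1/2)^k"
    using True unfolding cantor_dist_def k_def by simp
  have attained: "\<exists>h\<in>X. x h \<noteq> y h \<and> word_len G D h = k"
    unfolding k_def by (rule LeastI_ex) (use True in blast)
  have least: "k \<le> word_len G D h" if "h \<in> X" "x h \<noteq> y h" for h
    unfolding k_def by (rule Least_le) (use that in blast)
  have "m \<le> k \<longleftrightarrow> (\<forall>h\<in>X. word_len G D h < m \<longrightarrow> x h = y h)"
  proof
    assume "m \<le> k"
    show "\<forall>h\<in>X. word_len G D h < m \<longrightarrow> x h = y h"
    proof (intro ballI impI)
      fix h assume "h \<in> X" "word_len G D h < m"
      then show "x h = y h"
        using least[OF \<open>h \<in> X\<close>] \<open>m \<le> k\<close> by (cases "x h = y h") auto
    qed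
  next
    assume agree: "\<forall>h\<in>X. word_len G D h < m \<longrightarrow> x h = y h"
    from attained obtain h where "h \<in> X" "x h \<noteq> y h" "word_len G D h = k" by blast
    with agree show "m \<le> k" by (auto simp: not_less[symmetric])
  qed
  moreover have "((1/2::real)^k \<le> (1/2)^m) \<longleftrightarrow> m \<le> k"
    by (rule power_decreasing_iff) simp_all
  ultimately show ?thesis unfolding dist by simp
qed (simp add: cantor_dist_def)

lemma mem_cantor_ball_power_iff:
  "z \<in> cantor_ball G D X A x ((1/2)^m) \<longleftrightarrow>
    z \<in> X \<rightarrow>\<^sub>E A \<and> (\<forall>h\<in>X. word_len G D h < m \<longrightarrow> x h = z h)"
  unfolding cantor_ball_def cantor_dist_le_power_iff by blast

lemma cantor_ball_mono: "r \<le> s \<Longrightarrow> cantor_ball G D X A x r \<subseteq> cantor_ball G D X A x s"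
  unfolding cantor_ball_def by auto

lemma equicontinuity_point_power_iff:
  "equicontinuity_point G D X A Phi x \<longleftrightarrow> x \<in> X \<rightarrow>\<^sub>E A \<and>
    (\<forall>m. \<exists>n. \<forall>t. (Phi ^^ t) ` cantor_ball G D X A x ((1/2)^n)
                  \<subseteq> cantor_ball G D X A ((Phi ^^ t) x) ((1/2)^m))"
  (is "_ \<longleftrightarrow> _ \<and> ?powers")
proof -
  have small_power: "\<exists>n. (1/2::real)^n \<le> r" if "r > 0" for r :: real
    using real_arch_pow_inv[OF that, of "1/2"] by (auto intro: less_imp_le)
  have "?powers" if stable: "\<forall>\<epsilon>>0. \<exists>\<delta>>0. \<forall>t. (Phi ^^ t) ` cantor_ball G D X A x \<delta>
                                    \<subseteq> cantor_ball G D X A ((Phi ^^ t) x) \<epsilon>"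
  proof
    fix m
    have "(0::real) < (1/2)^m" by simp
    obtain \<delta> where "\<delta> > 0" and \<delta>: "\<And>t. (Phi ^^ t) ` cantor_ball G D X A x \<delta>
                                   \<subseteq> cantor_ball G D X A ((Phi ^^ t) x) ((1/2)^m)"
      using stable[rule_format, OF \<open>0 < (1/2)^m\<close>] by blast
    obtain n where n: "(1/2)^n \<le> \<delta>" using small_power[OF \<open>\<delta> > 0\<close>] by blast
    show "\<exists>n. \<forall>t. (Phi ^^ t) ` cantor_ball G D X A x ((1/2)^n)
                  \<subseteq> cantor_ball G D X A ((Phi ^^ t) x) ((1/2)^m)"
      by (intro exI[of _ n] allI subset_trans[OF image_mono[OF cantor_ball_mono[OF n]] \<delta>])
  qed
  moreover have "\<exists>\<delta>>0. \<forall>t. (Phi ^^ t) ` cantor_ball G D X A x \<delta>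
                        \<subseteq> cantor_ball G D X A ((Phi ^^ t) x) \<epsilon>" if ?powers "\<epsilon> > 0" for \<epsilon>
  proof -
    obtain m where m: "(1/2)^m \<le> \<epsilon>" using small_power[OF \<open>\<epsilon> > 0\<close>] by blast
    obtain n where n: "\<And>t. (Phi ^^ t) ` cantor_ball G D X A x ((1/2)^n)
                            \<subseteq> cantor_ball G D X A ((Phi ^^ t) x) ((1/2)^m)"
      using \<open>?powers\<close> by blast
    show ?thesis
    proof (intro exI[of _ "(1/2)^n"] conjI allI)
      show "(0::real) < (1/2)^n" by simp
      show "(Phi ^^ t) ` cantor_ball G D X A x ((1/2)^n) \<subseteq> cantor_ball G D X A ((Phi ^^ t) x) \<epsilon>"
        for t by (rule subset_trans[OF n cantor_ball_mono[OF m]])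
    qed
  qed
  ultimately show ?thesis unfolding equicontinuity_point_def by meson
qed

lemma restrict_mem_cantor_ball:
  assumes "H \<subseteq> X" "\<forall>h\<in>H. word_len G D h \<le> word_len G E h"
    and "z \<in> cantor_ball G D X A x ((1/2)^m)"
  shows "restrict z H \<in> cantor_ball G E H A (restrict x H) ((1/2)^m)"
  using assms unfolding mem_cantor_ball_power_iff
  by (auto simp: PiE_iff subset_iff intro: le_less_trans)

lemma extend_mem_cantor_ball:
  assumes "H \<subseteq> X" "x \<in> X \<rightarrow>\<^sub>E A" "finite {h \<in> H. word_len G D h < n'}"
  obtains n where "\<And>z. z \<in> cantor_ball G E H A (restrict x H) ((1/2)^n) \<Longrightarrow>
    (\<lambda>g\<in>X. if g \<in> H then z g else x g) \<in> cantor_ball G D X A x ((1/2)^n')"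
proof -
  have "finite (word_len G E ` {h \<in> H. word_len G D h < n'})"
    using assms(3) by (rule finite_imageI)
  then obtain n where "\<forall>k \<in> word_len G E ` {h \<in> H. word_len G D h < n'}. k < n"
    unfolding finite_nat_set_iff_bounded by blast
  then have "\<forall>h\<in>H. word_len G D h < n' \<longrightarrow> word_len G E h < n" by blast
  with assms(1,2) show ?thesis
    by (intro that) (auto simp: mem_cantor_ball_power_iff PiE_iff subset_iff)
qed

lemma restrict_cellular_automaton:
  assumes "H \<subseteq> X" "\<forall>h\<in>H. \<forall>s\<in>S. h \<otimes>\<^bsub>G\<^esub> s \<in> H"
  shows "restrict (cellular_automaton G S mu X v) H = cellular_automaton G S mu H (restrict v H)"
  unfolding cellular_automaton_def
proof (rule restrict_ext)
  fix h assume "h \<in> H"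
  then have "restrict (\<lambda>s. v (h \<otimes>\<^bsub>G\<^esub> s)) S = restrict (\<lambda>s. restrict v H (h \<otimes>\<^bsub>G\<^esub> s)) S"
    using assms(2) by (intro restrict_ext) simp
  with \<open>h \<in> H\<close> assms(1) show "restrict (\<lambda>h. mu (\<lambda>s\<in>S. v (h \<otimes>\<^bsub>G\<^esub> s))) X h
      = mu (\<lambda>s\<in>S. restrict v H (h \<otimes>\<^bsub>G\<^esub> s))"
    by auto
qed

lemma restrict_cellular_automaton_iterate:
  assumes "H \<subseteq> X" "\<forall>h\<in>H. \<forall>s\<in>S. h \<otimes>\<^bsub>G\<^esub> s \<in> H"
  shows "restrict ((cellular_automaton G S mu X ^^ t) v) H
       = (cellular_automaton G S mu H ^^ t) (restrict v H)"
proof (induction t)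
  case (Suc t)
  then show ?case
    by (simp only: funpow.simps comp_apply restrict_cellular_automaton[OF assms])
qed simp

lemma equicontinuity_point_restrict:
  assumes H_sub: "H \<subseteq> X"
    and commute: "\<And>t v. restrict ((Phi ^^ t) v) H = (Psi ^^ t) (restrict v H)"
    and len_le: "\<forall>h\<in>H. word_len G D h \<le> word_len G E h"
    and finite_short: "\<And>n. finite {h \<in> H. word_len G D h < n}"
    and "equicontinuity_point G D X A Phi x"
  shows "equicontinuity_point G E H A Psi (restrict x H)"
proof -
  have x: "x \<in> X \<rightarrow>\<^sub>E A"
    and x_stable: "\<And>m. \<exists>n. \<forall>t. (Phi ^^ t) ` cantor_ball G D X A x ((1/2)^n)
                             \<subseteq> cantor_ball G D X A ((Phi ^^ t) x) ((1/2)^m)"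
    using assms(5) unfolding equicontinuity_point_power_iff by blast+
  have "\<exists>n. \<forall>t. (Psi ^^ t) ` cantor_ball G E H A (restrict x H) ((1/2)^n)
             \<subseteq> cantor_ball G E H A ((Psi ^^ t) (restrict x H)) ((1/2)^m)" for m
  proof -
    obtain n' where n': "\<And>t. (Phi ^^ t) ` cantor_ball G D X A x ((1/2)^n')
                              \<subseteq> cantor_ball G D X A ((Phi ^^ t) x) ((1/2)^m)"
      using x_stable by blast
    obtain n where extend: "\<And>z. z \<in> cantor_ball G E H A (restrict x H) ((1/2)^n) \<Longrightarrow>
        (\<lambda>g\<in>X. if g \<in> H then z g else x g) \<in> cantor_ball G D X A x ((1/2)^n')"
      using extend_mem_cantor_ball[OF H_sub x finite_short] by blast
    have "(Psi ^^ t) z \<in> cantor_ball G E H A ((Psi ^^ t) (restrict x H)) ((1/2)^m)"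
      if z: "z \<in> cantor_ball G E H A (restrict x H) ((1/2)^n)" for t z
    proof -
      define x' where "x' = (\<lambda>g\<in>X. if g \<in> H then z g else x g)"
      have "x' \<in> cantor_ball G D X A x ((1/2)^n')"
        unfolding x'_def using extend[OF z] .
      then have "(Phi ^^ t) x' \<in> cantor_ball G D X A ((Phi ^^ t) x) ((1/2)^m)"
        using n' by blast
      then have "restrict ((Phi ^^ t) x') H
          \<in> cantor_ball G E H A (restrict ((Phi ^^ t) x) H) ((1/2)^m)"
        by (rule restrict_mem_cantor_ball[OF H_sub len_le])
      moreover have "restrict x' H = restrict z H"
        unfolding x'_def using H_sub by (intro restrict_ext) auto
      moreover have "restrict z H = z"
        using z unfolding cantor_ball_def by (simp add: PiE_iff extensional_restrict)
      ultimately show ?thesis by (simp only: commute)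
    qed
    then show ?thesis by blast
  qed
  moreover have "restrict x H \<in> H \<rightarrow>\<^sub>E A"
    using x H_sub by (auto simp: PiE_iff)
  ultimately show ?thesis unfolding equicontinuity_point_power_iff by blast
qed

theorem proposition5:
  fixes G :: "('g, 'b) monoid_scheme"
    and H E D S :: "'g set"
    and A :: "'a set"
    and mu :: "('g \<Rightarrow> 'a) \<Rightarrow> 'a"
  assumes "group G"
    and "subgroup H G"
    and "finite E" "E \<subseteq> H" "\<forall>e\<in>E. inv\<^bsub>G\<^esub> e \<in> E" "generate G E = H"
    and "finite D" "E \<subseteq> D" "D \<subseteq> carrier G" "\<forall>d\<in>D. inv\<^bsub>G\<^esub> d \<in> D"
    and "generate G D = carrier G"
    and "finite A"
    and "finite S" "S \<subseteq> H"
    and "mu \<in> (S \<rightarrow>\<^sub>E A) \<rightarrow> A"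
    and "\<exists>x. equicontinuity_point G D (carrier G) A (cellular_automaton G S mu (carrier G)) x"
  shows "\<exists>x. equicontinuity_point G E H A (cellular_automaton G S mu H) x"
proof -
  obtain x where x: "equicontinuity_point G D (carrier G) A (cellular_automaton G S mu (carrier G)) x"
    using assms(16) by blast
  have H_sub: "H \<subseteq> carrier G"
    using assms(2) by (rule subgroup.subset)
  have E_sub: "E \<subseteq> carrier G"
    using assms(8,9) by (rule order_trans)
  have H_words: "H = word_prod G ` lists E"
    using group.generate_eq_word_prods[OF assms(1) E_sub assms(5)] assms(6) by simp
  have G_words: "carrier G = word_prod G ` lists D"
    using group.generate_eq_word_prods[OF assms(1) assms(9,10)] assms(11) by simp
  have "\<forall>h\<in>H. \<forall>s\<in>S. h \<otimes>\<^bsub>G\<^esub> s \<in> H"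
    using assms(14) subgroup.m_closed[OF assms(2)] by blast
  note commute = restrict_cellular_automaton_iterate[OF H_sub this]
  have len_le: "\<forall>h\<in>H. word_len G D h \<le> word_len G E h"
    using word_len_antimono_gens[OF assms(8)] unfolding H_words by blast
  have "{h \<in> H. word_len G D h < n} \<subseteq> {g \<in> word_prod G ` lists D. word_len G D g < n}" for n
    using H_sub unfolding G_words by blast
  then have finite_short: "finite {h \<in> H. word_len G D h < n}" for n
    using finite_word_len_less[OF assms(7)] by (rule finite_subset)
  show ?thesis
    using equicontinuity_point_restrict[OF H_sub commute len_le finite_short x] by blast
qed

end
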